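(* Let $D\subset\mathbb{C}^n$ be a domain containing $o$, let $\Phi^D_{o,\max}$ be a global Zhou weight related to $|f_0|^2e^{-2\varphi_0}$ on $D$, and let $\psi$ be a negative plurisubharmonic function on $D$. Then $\psi\le\sigma(\psi,\Phi^D_{o,\max})\,\Phi^D_{o,\max}$ on all of $D$.
   Context: Let $o$ be the origin; "near $o$" means on some neighborhood of $o$; "integrable near $o$" means Lebesgue integrable on some neighborhood of $o$. Let $f_0=(f_{0,1},\dots,f_{0,m})$ be holomorphic near $o$, $|f_0|^2=\sum|f_{0,j}|^2$, $\varphi_0$ plurisubharmonic near $o$ with $|f_0|^2e^{-2\varphi_0}$ integrable near $o$. A negative plurisubharmonic function $\Phi^D_{o,\max}$ on $D$ is a global Zhou weight related to $|f_0|^2e^{-2\varphi_0}$ on $D$ if: (1) $|f_0|^2e^{-2\varphi_0}|z|^{2N_0}e^{-2\Phi^D_{o,\max}}$ is integrable near $o$ for some $N_0$; (2) $|f_0|^2e^{-2\varphi_0-2\Phi^D_{o,\max}}$ is not integrable near $o$; (3) every negative plurisubharmonic $\tilde\varphi$ on $D$ with $\tilde\varphi\ge\Phi^D_{o,\max}$ on $D$ and $|f_0|^2e^{-2\varphi_0-2\tilde\varphi}$ not integrable near $o$ equals $\Phi^D_{o,\max}$ on $D$. $\sigma(\psi,\Phi):=\sup\{b\ge0:\psi\le b\Phi+O(1)\text{ near }o\}$ (with the convention $0\cdot\Phi:=0$ if $\sigma=0$). *)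

theory Defs
  imports "HOL-Analysis.Analysis"
begin

text \<open>Points of C^n are modelled as vectors of type complex^'n (for an arbitrary finite
  index type 'n); the origin o is 0.  Plurisubharmonic functions take values in
  [-\<infinity>, +\<infinity>) and are modelled as ereal-valued functions.\<close>

definition cscale :: "complex \<Rightarrow> complex^'k \<Rightarrow> complex^'k" where
  "cscale c v = (\<chi> j. c * v $ j)"

definition holo_on :: "(complex^'n) set \<Rightarrow> (complex^'n \<Rightarrow> complex^'m) \<Rightarrow> bool" where
  "holo_on U f \<longleftrightarrow> open U \<and>
     (\<forall>z\<in>U. \<exists>L. (f has_derivative L) (at z) \<and> (\<forall>c v. L (cscale c v) = cscale c (L v)))"

definition holo_near_0 :: "(complex^'n \<Rightarrow> complex^'m) \<Rightarrow> bool" where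
  "holo_near_0 f \<longleftrightarrow> (\<exists>U. open U \<and> 0 \<in> U \<and> holo_on U f)"

definition usc_on :: "(complex^'n) set \<Rightarrow> (complex^'n \<Rightarrow> ereal) \<Rightarrow> bool" where
  "usc_on D u \<longleftrightarrow> (\<forall>z\<in>D. \<forall>t. u z < t \<longrightarrow> (\<forall>\<^sub>F w in at z within D. u w < t))"

text \<open>Sub-mean value inequality on the circle {a + e^(i theta) b}: for every real upper
  bound c of u on the circle,
  u a \<le> c - (1/2pi) \<integral>_0^{2pi} (c - u(a + e^(i theta) b)) d theta,
  i.e. u a \<le> (1/2pi) \<integral>_0^{2pi} u(a + e^(i theta) b) d theta
  (the integral of an upper bounded function, with value in [-\<infinity>,\<infinity>)).\<close>
definition sub_mean :: "(complex^'n \<Rightarrow> ereal) \<Rightarrow> complex^'n \<Rightarrow> complex^'n \<Rightarrow> bool" where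
  "sub_mean u a b \<longleftrightarrow>
     (\<forall>c::real. (\<forall>\<theta>\<in>{0..2*pi}. u (a + cscale (exp (\<i> * of_real \<theta>)) b) \<le> ereal c) \<longrightarrow>
        u a \<le> ereal c - enn2ereal (\<integral>\<^sup>+ \<theta>\<in>{0..2*pi}.
                 e2ennreal (ereal c - u (a + cscale (exp (\<i> * of_real \<theta>)) b)) \<partial>lborel)
                 / ereal (2*pi))"

definition psh_on :: "(complex^'n) set \<Rightarrow> (complex^'n \<Rightarrow> ereal) \<Rightarrow> bool" where
  "psh_on D u \<longleftrightarrow> open D \<and> (\<forall>z\<in>D. u z < \<infinity>) \<and> usc_on D u \<and>
     (\<forall>a b. (\<forall>\<zeta>. cmod \<zeta> \<le> 1 \<longrightarrow> a + cscale \<zeta> b \<in> D) \<longrightarrow> sub_mean u a b)"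

definition psh_near_0 :: "(complex^'n \<Rightarrow> ereal) \<Rightarrow> bool" where
  "psh_near_0 u \<longleftrightarrow> (\<exists>U. open U \<and> 0 \<in> U \<and> psh_on U u)"

definition eexp :: "ereal \<Rightarrow> ennreal" where
  "eexp x = (case x of ereal r \<Rightarrow> ennreal (exp r) | PInfty \<Rightarrow> \<infinity> | MInfty \<Rightarrow> 0)"

definition integrable_near_0 :: "(complex^'n \<Rightarrow> ennreal) \<Rightarrow> bool" where
  "integrable_near_0 g \<longleftrightarrow> (\<exists>U. open U \<and> 0 \<in> U \<and>
     (\<lambda>z. indicator U z * g z) \<in> borel_measurable lebesgue \<and>
     (\<integral>\<^sup>+ z. indicator U z * g z \<partial>lebesgue) < \<infinity>)"

definition wt :: "(complex^'n \<Rightarrow> complex^'m) \<Rightarrow> (complex^'n \<Rightarrow> ereal) \<Rightarrow> (complex^'n \<Rightarrow> ereal)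
     \<Rightarrow> complex^'n \<Rightarrow> ennreal" where
  "wt f0 \<phi>0 \<phi> z = ennreal ((norm (f0 z))^2) * eexp (- 2 * \<phi>0 z) * eexp (- 2 * \<phi> z)"

definition domain :: "(complex^'n) set \<Rightarrow> bool" where
  "domain D \<longleftrightarrow> open D \<and> connected D \<and> D \<noteq> {}"

definition neg_psh_on :: "(complex^'n) set \<Rightarrow> (complex^'n \<Rightarrow> ereal) \<Rightarrow> bool" where
  "neg_psh_on D u \<longleftrightarrow> psh_on D u \<and> (\<forall>z\<in>D. u z < 0)"

definition global_zhou_weight ::
  "(complex^'n) set \<Rightarrow> (complex^'n \<Rightarrow> complex^'m) \<Rightarrow> (complex^'n \<Rightarrow> ereal) \<Rightarrow> (complex^'n \<Rightarrow> ereal) \<Rightarrow> bool" where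
  "global_zhou_weight D f0 \<phi>0 \<Phi> \<longleftrightarrow> neg_psh_on D \<Phi> \<and>
     (\<exists>N0::nat. integrable_near_0 (\<lambda>z. wt f0 \<phi>0 \<Phi> z * ennreal (norm z ^ (2 * N0)))) \<and>
     \<not> integrable_near_0 (wt f0 \<phi>0 \<Phi>) \<and>
     (\<forall>\<phi>'. neg_psh_on D \<phi>' \<and> (\<forall>z\<in>D. \<Phi> z \<le> \<phi>' z) \<and> \<not> integrable_near_0 (wt f0 \<phi>0 \<phi>')
        \<longrightarrow> (\<forall>z\<in>D. \<phi>' z = \<Phi> z))"

text \<open>sigma(psi, Phi) = sup{b \<ge> 0 : psi \<le> b Phi + O(1) near o}; in ereal, 0 * (-\<infinity>) = 0.\<close>
definition sigma :: "(complex^'n \<Rightarrow> ereal) \<Rightarrow> (complex^'n \<Rightarrow> ereal) \<Rightarrow> ereal" where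
  "sigma \<psi> \<Phi> = Sup {ereal b | b. b \<ge> 0 \<and>
      (\<exists>U C. open U \<and> 0 \<in> U \<and> (\<forall>z\<in>U. \<psi> z \<le> ereal b * \<Phi> z + ereal C))}"

end

theory Submission
  imports Defs
begin

text \<open>If \<open>\<psi> \<le> b \<Phi> + O(1)\<close> near the origin with \<open>b > 0\<close>, then \<open>max (\<psi>/b) \<Phi>\<close> is a
  negative plurisubharmonic function on \<open>D\<close> lying above \<open>\<Phi>\<close> and within a bounded distance
  of \<open>\<Phi>\<close> near the origin. Its weight therefore dominates that of \<open>\<Phi>\<close> up to a constant
  factor, so it is not integrable near the origin either, and the maximality of the
  global Zhou weight forces \<open>max (\<psi>/b) \<Phi> = \<Phi>\<close>, i.e. \<open>\<psi> \<le> b \<Phi>\<close> on all of \<open>D\<close>.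
  Since \<open>\<Phi> \<le> 0\<close>, multiplication by \<open>\<Phi>\<close> turns the supremum over all admissible \<open>b\<close>
  into an infimum, which gives \<open>\<psi> \<le> \<sigma>(\<psi>, \<Phi>) \<Phi>\<close>.\<close>

lemma ereal_mult_le_iff_le_divide: "b > 0 \<Longrightarrow> ereal b * x \<le> ereal r \<longleftrightarrow> x \<le> ereal (r / b)"
  by (cases x) (auto simp: field_simps)

lemma ereal_mult_less_iff_less_divide: "b > 0 \<Longrightarrow> ereal b * x < ereal r \<longleftrightarrow> x < ereal (r / b)"
  by (cases x) (auto simp: field_simps)

lemma ereal_le_mult_of_inverse_mult_le:
  fixes x y :: ereal
  assumes "b > 0" "ereal (1/b) * x \<le> y"
  shows "x \<le> ereal b * y"
  using assms by (cases x; cases y) (auto simp: field_simps)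

lemma ereal_le_Sup_mult_nonpos:
  fixes S :: "ereal set" and p y :: ereal
  assumes "S \<noteq> {}" "\<And>x. x \<in> S \<Longrightarrow> 0 \<le> x" "y \<le> 0" "\<And>x. x \<in> S \<Longrightarrow> p \<le> x * y"
  shows "p \<le> Sup S * y"
proof -
  have "Sup S * y = - ((- y) * (SUP x\<in>S. x))" by (simp add: mult.commute)
  also have "\<dots> = - (SUP x\<in>S. (- y) * x)"
    using assms(1-3) by (subst SUP_ereal_mult_left) auto
  also have "\<dots> = (INF x\<in>S. x * y)"
    by (simp add: ereal_INF_uminus_eq[symmetric] mult.commute)
  finally show ?thesis using assms(4) by (simp add: le_INF_iff)
qed

lemma max_inverse_mult_le_add:
  fixes x y :: ereal
  assumes "x \<le> ereal b * y + ereal C" "b > 0"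
  shows "max (ereal (1/b) * x) y \<le> y + ereal (\<bar>C\<bar>/b)"
proof (cases y)
  case (real r)
  show ?thesis
  proof (cases x)
    case (real q)
    have "q/b \<le> r + C/b" using assms real \<open>y = ereal r\<close> by (simp add: field_simps)
    moreover have "C/b \<le> \<bar>C\<bar>/b" using assms(2) by (simp add: divide_right_mono)
    ultimately show ?thesis using real \<open>y = ereal r\<close> assms(2) by simp
  qed (use assms real in auto)
next
  case MInf
  then have "x = -\<infinity>" using assms by (cases x) auto
  then show ?thesis using MInf assms(2) by simp
qed simp

lemma nn_integral_cmult_ge: "c * integral\<^sup>N M f \<le> (\<integral>\<^sup>+ x. c * f x \<partial>M)"
proof -
  have "c * integral\<^sup>N M f = (SUP g \<in> {g. simple_function M g \<and> g \<le> f}. c * integral\<^sup>S M g)"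
    unfolding nn_integral_def by (rule SUP_mult_left_ennreal)
  also have "\<dots> \<le> (\<integral>\<^sup>+ x. c * f x \<partial>M)"
  proof (rule SUP_least)
    fix g assume "g \<in> {g. simple_function M g \<and> g \<le> f}"
    then have g: "simple_function M g" "g \<le> f" by auto
    have "c * integral\<^sup>S M g = integral\<^sup>S M (\<lambda>x. c * g x)"
      using simple_integral_mult[OF g(1)] by simp
    also have "\<dots> \<le> (\<integral>\<^sup>+ x. c * f x \<partial>M)"
      unfolding nn_integral_def
      by (rule SUP_upper) (use g in \<open>auto simp: le_fun_def intro: mult_left_mono\<close>)
    finally show "c * integral\<^sup>S M g \<le> (\<integral>\<^sup>+ x. c * f x \<partial>M)" .
  qed
  finally show ?thesis .
qed

text \<open>Unlike \<open>nn_integral_cmult\<close>, no measurability is needed: apply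
  \<open>nn_integral_cmult_ge\<close> to \<open>s\<close> and to \<open>1/s\<close>.\<close>
lemma nn_integral_cmult_pos:
  assumes "s > 0"
  shows "(\<integral>\<^sup>+ x. ennreal s * f x \<partial>M) = ennreal s * integral\<^sup>N M f"
proof (rule antisym)
  have inv: "ennreal s * ennreal (1/s) = 1" using assms by (simp flip: ennreal_mult'')
  have "ennreal (1/s) * (\<integral>\<^sup>+ x. ennreal s * f x \<partial>M) \<le> (\<integral>\<^sup>+ x. ennreal (1/s) * (ennreal s * f x) \<partial>M)"
    by (rule nn_integral_cmult_ge)
  also have "\<dots> = integral\<^sup>N M f" by (simp add: mult.assoc[symmetric] mult.commute[of "ennreal (1/s)"] inv)
  finally have "ennreal s * (ennreal (1/s) * (\<integral>\<^sup>+ x. ennreal s * f x \<partial>M)) \<le> ennreal s * integral\<^sup>N M f"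
    by (rule mult_left_mono) simp
  then show "(\<integral>\<^sup>+ x. ennreal s * f x \<partial>M) \<le> ennreal s * integral\<^sup>N M f"
    by (simp add: mult.assoc[symmetric] inv)
qed (rule nn_integral_cmult_ge)

lemma e2ennreal_diff_mult:
  assumes "s > 0" "x \<le> ereal (c/s)"
  shows "e2ennreal (ereal c - ereal s * x) = ennreal s * e2ennreal (ereal (c/s) - x)"
proof (cases x)
  case (real r)
  have "c - s*r = s * (c/s - r)" using assms(1) by (simp add: field_simps)
  then show ?thesis using real assms
    by (simp add: e2ennreal_ereal ennreal_mult'[symmetric] ennreal_mult''[symmetric])
qed (use assms in auto)

lemma usc_on_cmult:
  assumes "s > 0" "usc_on D u" "\<forall>z\<in>D. u z < \<infinity>"
  shows "usc_on D (\<lambda>z. ereal s * u z)"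
  unfolding usc_on_def
proof (intro ballI allI impI)
  fix z t assume z: "z \<in> D" and lt: "ereal s * u z < t"
  show "\<forall>\<^sub>F w in at z within D. ereal s * u w < t"
  proof (cases t)
    case (real r)
    then have "u z < ereal (r/s)" using lt ereal_mult_less_iff_less_divide[OF assms(1)] by simp
    then have "\<forall>\<^sub>F w in at z within D. u w < ereal (r/s)" using assms(2) z unfolding usc_on_def by blast
    then show ?thesis by eventually_elim (use real ereal_mult_less_iff_less_divide[OF assms(1)] in simp)
  next
    case PInf
    have "\<forall>\<^sub>F w in at z within D. w \<in> D" by (simp add: eventually_at_filter)
    then show ?thesis
    proof eventually_elim
      case (elim w)
      then have "u w < \<infinity>" using assms(3) by blast
      then show ?case using PInf assms(1) by (cases "u w") auto
    qed
  qed (use lt in simp)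
qed

lemma usc_on_max:
  assumes "usc_on D u" "usc_on D v"
  shows "usc_on D (\<lambda>z. max (u z) (v z))"
  unfolding usc_on_def
proof (intro ballI allI impI)
  fix z t assume "z \<in> D" "max (u z) (v z) < t"
  then have "\<forall>\<^sub>F w in at z within D. u w < t" "\<forall>\<^sub>F w in at z within D. v w < t"
    using assms unfolding usc_on_def by auto
  then show "\<forall>\<^sub>F w in at z within D. max (u w) (v w) < t" by eventually_elim auto
qed

lemma sub_mean_cmult:
  assumes "s > 0" "sub_mean u a b"
  shows "sub_mean (\<lambda>z. ereal s * u z) a b"
  unfolding sub_mean_def
proof (intro allI impI)
  fix c :: real
  define P where "P \<theta> = a + cscale (exp (\<i> * of_real \<theta>)) b" for \<theta>
  assume "\<forall>\<theta>\<in>{0..2*pi}. ereal s * u (a + cscale (exp (\<i> * of_real \<theta>)) b) \<le> ereal c"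
  then have bound: "\<forall>\<theta>\<in>{0..2*pi}. u (P \<theta>) \<le> ereal (c/s)"
    using ereal_mult_le_iff_le_divide[OF assms(1)] unfolding P_def by blast
  define I where "I = (\<integral>\<^sup>+ \<theta>\<in>{0..2*pi}. e2ennreal (ereal (c/s) - u (P \<theta>)) \<partial>lborel)"
  have mean: "u a \<le> ereal (c/s) - enn2ereal I / ereal (2*pi)"
    using assms(2) bound unfolding sub_mean_def I_def P_def by blast
  have "(\<integral>\<^sup>+ \<theta>\<in>{0..2*pi}. e2ennreal (ereal c - ereal s * u (P \<theta>)) \<partial>lborel)
      = (\<integral>\<^sup>+ \<theta>. ennreal s * (e2ennreal (ereal (c/s) - u (P \<theta>)) * indicator {0..2*pi} \<theta>) \<partial>lborel)"
    by (intro nn_integral_cong) (auto simp: e2ennreal_diff_mult[OF assms(1)] bound indicator_def)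
  also have "\<dots> = ennreal s * I"
    unfolding I_def by (rule nn_integral_cmult_pos[OF assms(1)])
  finally have scaled: "enn2ereal (\<integral>\<^sup>+ \<theta>\<in>{0..2*pi}. e2ennreal (ereal c - ereal s * u (P \<theta>)) \<partial>lborel)
      = ereal s * enn2ereal I"
    using assms(1) by (simp add: times_ennreal.rep_eq)
  have "ereal s * u a \<le> ereal c - ereal s * enn2ereal I / ereal (2*pi)"
  proof (cases "enn2ereal I")
    case (real e)
    with mean assms(1) show ?thesis
      by (cases "u a") (auto simp: field_simps)
  next
    case PInf
    then have "u a = -\<infinity>" using mean by (cases "u a") auto
    then show ?thesis using assms(1) by simp
  qed (use enn2ereal_nonneg[of I] in simp)
  then show "ereal s * u a \<le> ereal c - enn2ereal (\<integral>\<^sup>+ \<theta>\<in>{0..2*pi}.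
      e2ennreal (ereal c - ereal s * u (a + cscale (exp (\<i> * of_real \<theta>)) b)) \<partial>lborel) / ereal (2*pi)"
    using scaled unfolding P_def by simp
qed

lemma sub_mean_max:
  assumes "sub_mean u a b" "sub_mean v a b"
  shows "sub_mean (\<lambda>z. max (u z) (v z)) a b"
  unfolding sub_mean_def
proof (intro allI impI)
  fix c :: real
  define P where "P \<theta> = a + cscale (exp (\<i> * of_real \<theta>)) b" for \<theta>
  assume bound: "\<forall>\<theta>\<in>{0..2*pi}. max (u (a + cscale (exp (\<i> * of_real \<theta>)) b)) (v (a + cscale (exp (\<i> * of_real \<theta>)) b)) \<le> ereal c"
  define I where "I = (\<integral>\<^sup>+ \<theta>\<in>{0..2*pi}. e2ennreal (ereal c - max (u (P \<theta>)) (v (P \<theta>))) \<partial>lborel)"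
  have below: "w a \<le> ereal c - enn2ereal I / ereal (2*pi)"
    if w: "sub_mean w a b" and w_le: "\<And>x. w x \<le> max (u x) (v x)" for w
  proof -
    define Iw where "Iw = (\<integral>\<^sup>+ \<theta>\<in>{0..2*pi}. e2ennreal (ereal c - w (P \<theta>)) \<partial>lborel)"
    have "\<forall>\<theta>\<in>{0..2*pi}. w (P \<theta>) \<le> ereal c"
      using bound w_le order_trans unfolding P_def by blast
    then have "w a \<le> ereal c - enn2ereal Iw / ereal (2*pi)"
      using w unfolding sub_mean_def Iw_def P_def by blast
    moreover have "I \<le> Iw" unfolding I_def Iw_def
      by (intro nn_integral_mono mult_right_mono e2ennreal_mono ereal_minus_mono) (auto simp: w_le)
    then have "enn2ereal I / ereal (2*pi) \<le> enn2ereal Iw / ereal (2*pi)"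
      by (intro ereal_divide_right_mono) (auto simp: less_eq_ennreal.rep_eq)
    ultimately show ?thesis by (meson ereal_minus_mono order.refl order_trans)
  qed
  have "u a \<le> ereal c - enn2ereal I / ereal (2*pi)" "v a \<le> ereal c - enn2ereal I / ereal (2*pi)"
    by (rule below[OF assms(1)], simp) (rule below[OF assms(2)], simp)
  then show "max (u a) (v a) \<le> ereal c - enn2ereal (\<integral>\<^sup>+ \<theta>\<in>{0..2*pi}.
        e2ennreal (ereal c - max (u (a + cscale (exp (\<i> * of_real \<theta>)) b)) (v (a + cscale (exp (\<i> * of_real \<theta>)) b))) \<partial>lborel) / ereal (2*pi)"
    unfolding I_def P_def by simp
qed

lemma neg_psh_on_cmult:
  assumes "s > 0" "neg_psh_on D u"
  shows "neg_psh_on D (\<lambda>z. ereal s * u z)"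
proof -
  have u: "open D" "\<forall>z\<in>D. u z < 0" "\<forall>z\<in>D. u z < \<infinity>" "usc_on D u"
    "\<forall>a b. (\<forall>\<zeta>. cmod \<zeta> \<le> 1 \<longrightarrow> a + cscale \<zeta> b \<in> D) \<longrightarrow> sub_mean u a b"
    using assms(2) by (auto simp: neg_psh_on_def psh_on_def)
  have neg: "\<forall>z\<in>D. ereal s * u z < 0"
  proof
    fix z assume "z \<in> D"
    then show "ereal s * u z < 0" using u(2) assms(1) by (cases "u z") (auto simp: mult_pos_neg)
  qed
  show ?thesis
    unfolding neg_psh_on_def psh_on_def
  proof (intro conjI ballI allI impI)
    show "usc_on D (\<lambda>z. ereal s * u z)" by (rule usc_on_cmult[OF assms(1) u(4,3)])
    show "sub_mean (\<lambda>z. ereal s * u z) a b" if "\<forall>\<zeta>. cmod \<zeta> \<le> 1 \<longrightarrow> a + cscale \<zeta> b \<in> D" for a b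
      using that u(5) sub_mean_cmult[OF assms(1)] by blast
  qed (use u(1) neg in auto)
qed

lemma neg_psh_on_max:
  assumes "neg_psh_on D u" "neg_psh_on D v"
  shows "neg_psh_on D (\<lambda>z. max (u z) (v z))"
  unfolding neg_psh_on_def psh_on_def
proof (intro conjI ballI allI impI)
  show "usc_on D (\<lambda>z. max (u z) (v z))"
    using assms by (intro usc_on_max) (auto simp: neg_psh_on_def psh_on_def)
  show "sub_mean (\<lambda>z. max (u z) (v z)) a b" if "\<forall>\<zeta>. cmod \<zeta> \<le> 1 \<longrightarrow> a + cscale \<zeta> b \<in> D" for a b
    using that assms by (intro sub_mean_max) (auto simp: neg_psh_on_def psh_on_def)
qed (use assms in \<open>auto simp: neg_psh_on_def psh_on_def max_def\<close>)

lemma borel_measurable_cancel_norm_power: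
  fixes g :: "'a::euclidean_space \<Rightarrow> ennreal"
  assumes "(\<lambda>z. indicator U z * (g z * ennreal (norm z ^ k))) \<in> borel_measurable lebesgue"
  shows "(\<lambda>z. indicator U z * g z) \<in> borel_measurable lebesgue"
proof -
  \<comment> \<open>Naming the constant keeps the \<open>measurable\<close> method from trying to prove
    \<open>U\<close> measurable, on which it does not terminate.\<close>
  define c where "c = indicator U 0 * g 0"
  have eq: "indicator U z * g z = indicator (-{0}) z * (indicator U z * (g z * ennreal (norm z ^ k)))
      * ennreal (1 / norm z ^ k) + indicator {0} z * c" for z
  proof (cases "z = 0")
    case False
    then have "ennreal (norm z ^ k) * ennreal (1 / norm z ^ k) = 1"
      by (simp flip: ennreal_mult'')
    then show ?thesis using False by (simp add: indicator_def mult.assoc)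
  qed (simp add: indicator_def c_def)
  have "(\<lambda>z::'a. indicator {0} z :: ennreal) \<in> borel_measurable lebesgue"
    by (intro borel_measurable_indicator) simp
  moreover have "(\<lambda>z::'a. indicator (-{0}) z :: ennreal) \<in> borel_measurable lebesgue"
    by (intro borel_measurable_indicator) (simp add: borel_open)
  moreover have "(\<lambda>z::'a. ennreal (1 / norm z ^ k)) \<in> borel_measurable lebesgue"
    by (rule measurable_completion) (simp add: measurable_lborel1)
  ultimately show ?thesis
    unfolding eq using assms by measurable
qed

lemma borel_measurable_indicator_restrict_open:
  fixes g :: "'a::euclidean_space \<Rightarrow> ennreal"
  assumes "open V" "(\<lambda>z. indicator U z * g z) \<in> borel_measurable lebesgue"
  shows "(\<lambda>z. indicator (V \<inter> U) z * g z) \<in> borel_measurable lebesgue"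
proof -
  have "(\<lambda>z. indicator V z :: ennreal) \<in> borel_measurable lebesgue"
    using assms(1) by (intro measurable_completion borel_measurable_indicator) (simp add: borel_open)
  then have "(\<lambda>z. indicator V z * (indicator U z * g z)) \<in> borel_measurable lebesgue"
    using assms(2) by (rule borel_measurable_times_ennreal)
  then show ?thesis by (simp add: indicator_inter_arith mult.assoc)
qed

lemma integrable_near_0_dominated:
  assumes h: "integrable_near_0 h" and U: "open U" "0 \<in> U"
    and g_meas: "(\<lambda>z. indicator U z * g z) \<in> borel_measurable lebesgue"
    and g_le: "\<And>z. z \<in> U \<Longrightarrow> g z \<le> ennreal c * h z"
  shows "integrable_near_0 g"
proof -
  obtain V where V: "open V" "0 \<in> V"
    and h_meas: "(\<lambda>z. indicator V z * h z) \<in> borel_measurable lebesgue"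
    and h_fin: "(\<integral>\<^sup>+ z. indicator V z * h z \<partial>lebesgue) < \<infinity>"
    using h unfolding integrable_near_0_def by blast
  have meas: "(\<lambda>z. indicator (V \<inter> U) z * g z) \<in> borel_measurable lebesgue"
    by (rule borel_measurable_indicator_restrict_open[OF V(1) g_meas])
  have "(\<integral>\<^sup>+ z. indicator (V \<inter> U) z * g z \<partial>lebesgue) \<le> (\<integral>\<^sup>+ z. ennreal c * (indicator V z * h z) \<partial>lebesgue)"
    by (intro nn_integral_mono) (auto simp: indicator_def g_le)
  also have "\<dots> = ennreal c * (\<integral>\<^sup>+ z. indicator V z * h z \<partial>lebesgue)"
    by (rule nn_integral_cmult[OF h_meas])
  also have "\<dots> < \<infinity>" using h_fin by (simp add: ennreal_mult_less_top)
  finally show ?thesis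
    unfolding integrable_near_0_def using U V meas by blast
qed

lemma eexp_neg2_le_of_le_add:
  fixes x y :: ereal
  assumes "x \<le> y + ereal K"
  shows "eexp (-2 * y) \<le> ennreal (exp (2*K)) * eexp (-2 * x)"
proof (cases x)
  case (real q)
  show ?thesis
  proof (cases y)
    case (real r)
    have "exp (-2*r) \<le> exp (2*K) * exp (-2*q)"
      using assms real \<open>x = ereal q\<close> by (simp add: exp_add[symmetric])
    then show ?thesis using real \<open>x = ereal q\<close>
      by (simp add: eexp_def ennreal_mult''[symmetric] ennreal_leI)
  qed (use assms real in \<open>auto simp: eexp_def\<close>)
next
  case PInf
  then have "y = \<infinity>" using assms by (cases y) auto
  then show ?thesis by (simp add: eexp_def)
qed (simp add: eexp_def ennreal_mult_top)

lemma wt_le_of_le_add: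
  assumes "\<phi> z \<le> \<Phi> z + ereal K"
  shows "wt f0 \<phi>0 \<Phi> z \<le> ennreal (exp (2*K)) * wt f0 \<phi>0 \<phi> z"
proof -
  have "wt f0 \<phi>0 \<Phi> z \<le> ennreal ((norm (f0 z))^2) * eexp (- 2 * \<phi>0 z) * (ennreal (exp (2*K)) * eexp (-2 * \<phi> z))"
    unfolding wt_def by (intro mult_left_mono eexp_neg2_le_of_le_add assms) simp
  also have "\<dots> = ennreal (exp (2*K)) * wt f0 \<phi>0 \<phi> z"
    by (simp add: wt_def ac_simps)
  finally show ?thesis .
qed

lemma not_integrable_near_0_wt_max_inverse_mult:
  assumes Z: "global_zhou_weight D f0 \<phi>0 \<Phi>" and "0 \<in> D"
    and b: "b > 0" and U: "open U" "0 \<in> U"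
    and near_0: "\<forall>z\<in>U. \<psi> z \<le> ereal b * \<Phi> z + ereal C"
  shows "\<not> integrable_near_0 (wt f0 \<phi>0 (\<lambda>z. max (ereal (1/b) * \<psi> z) (\<Phi> z)))"
proof
  assume int: "integrable_near_0 (wt f0 \<phi>0 (\<lambda>z. max (ereal (1/b) * \<psi> z) (\<Phi> z)))"
  obtain N0 U1 where U1: "open U1" "0 \<in> U1"
    and meas: "(\<lambda>z. indicator U1 z * (wt f0 \<phi>0 \<Phi> z * ennreal (norm z ^ (2 * N0)))) \<in> borel_measurable lebesgue"
    using Z unfolding global_zhou_weight_def integrable_near_0_def by blast
  have "open D" using Z by (simp add: global_zhou_weight_def neg_psh_on_def psh_on_def)
  define W where "W = (U \<inter> D) \<inter> U1"
  have W: "open W" "0 \<in> W"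
    using U U1 \<open>0 \<in> D\<close> \<open>open D\<close> by (auto simp: W_def)
  have W_meas: "(\<lambda>z. indicator W z * wt f0 \<phi>0 \<Phi> z) \<in> borel_measurable lebesgue"
    unfolding W_def using U(1) \<open>open D\<close>
    by (intro borel_measurable_indicator_restrict_open borel_measurable_cancel_norm_power[OF meas]) auto
  have "wt f0 \<phi>0 \<Phi> z \<le> ennreal (exp (2 * (\<bar>C\<bar>/b))) * wt f0 \<phi>0 (\<lambda>z. max (ereal (1/b) * \<psi> z) (\<Phi> z)) z"
    if "z \<in> W" for z
    using that near_0 b unfolding W_def by (intro wt_le_of_le_add max_inverse_mult_le_add) auto
  then have "integrable_near_0 (wt f0 \<phi>0 \<Phi>)"
    by (rule integrable_near_0_dominated[OF int W W_meas])
  then show False using Z by (simp add: global_zhou_weight_def)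
qed

lemma le_mult_global_zhou_weight:
  assumes Z: "global_zhou_weight D f0 \<phi>0 \<Phi>" and \<psi>: "neg_psh_on D \<psi>" and "0 \<in> D"
    and b: "b \<ge> 0" and U: "open U" "0 \<in> U"
    and near_0: "\<forall>z\<in>U. \<psi> z \<le> ereal b * \<Phi> z + ereal C"
    and "z \<in> D"
  shows "\<psi> z \<le> ereal b * \<Phi> z"
proof (cases "b = 0")
  case True
  then show ?thesis using \<psi> \<open>z \<in> D\<close> by (auto simp: neg_psh_on_def zero_ereal_def[symmetric] less_imp_le)
next
  case False
  with b have "b > 0" by simp
  define \<phi> where "\<phi> z = max (ereal (1/b) * \<psi> z) (\<Phi> z)" for z
  have \<Phi>: "neg_psh_on D \<Phi>" using Z by (simp add: global_zhou_weight_def)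
  have "neg_psh_on D \<phi>"
    unfolding \<phi>_def using \<open>b > 0\<close> \<psi> \<Phi> by (intro neg_psh_on_max neg_psh_on_cmult) auto
  moreover have "\<not> integrable_near_0 (wt f0 \<phi>0 \<phi>)"
    unfolding \<phi>_def by (rule not_integrable_near_0_wt_max_inverse_mult[OF Z \<open>0 \<in> D\<close> \<open>b > 0\<close> U near_0])
  ultimately have "\<phi> z = \<Phi> z"
    using Z \<open>z \<in> D\<close> unfolding global_zhou_weight_def \<phi>_def by auto
  then have "ereal (1/b) * \<psi> z \<le> \<Phi> z" unfolding \<phi>_def by (metis max.cobounded1)
  then show ?thesis by (rule ereal_le_mult_of_inverse_mult_le[OF \<open>b > 0\<close>])
qed

theorem lemma8p9:
  fixes D :: "(complex^'n) set"
    and f0 :: "complex^'n \<Rightarrow> complex^'m"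
    and \<phi>0 \<Phi> \<psi> :: "complex^'n \<Rightarrow> ereal"
  assumes "domain D" and "0 \<in> D"
    and "holo_near_0 f0"
    and "psh_near_0 \<phi>0"
    and "integrable_near_0 (\<lambda>z. ennreal ((norm (f0 z))^2) * eexp (- 2 * \<phi>0 z))"
    and "global_zhou_weight D f0 \<phi>0 \<Phi>"
    and "neg_psh_on D \<psi>"
  shows "\<forall>z\<in>D. \<psi> z \<le> sigma \<psi> \<Phi> * \<Phi> z"
  \<comment> \<open>The hypotheses on \<open>f0\<close> and \<open>\<phi>0\<close> only matter for the existence of Zhou weights
    and are not used here.\<close>
proof
  fix z assume z: "z \<in> D"
  define S where "S = {ereal b | b. b \<ge> 0 \<and>
      (\<exists>U C. open U \<and> 0 \<in> U \<and> (\<forall>z\<in>U. \<psi> z \<le> ereal b * \<Phi> z + ereal C))}"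
  have "neg_psh_on D \<Phi>" using assms(6) by (simp add: global_zhou_weight_def)
  then have \<psi>_neg: "\<forall>z\<in>D. \<psi> z < 0" and "open D" and "\<Phi> z < 0"
    using assms(7) z by (auto simp: neg_psh_on_def psh_on_def)
  have "\<psi> z \<le> x * \<Phi> z" if "x \<in> S" for x
    using that le_mult_global_zhou_weight[OF assms(6,7,2) _ _ _ _ z] unfolding S_def by blast
  moreover have "0 \<in> S"
    unfolding S_def using \<open>open D\<close> assms(2) \<psi>_neg
    by (intro CollectI exI[of _ 0] conjI exI[of _ D]) (auto simp: zero_ereal_def[symmetric] less_imp_le)
  ultimately have "\<psi> z \<le> Sup S * \<Phi> z"
    using \<open>\<Phi> z < 0\<close> by (intro ereal_le_Sup_mult_nonpos) (auto simp: S_def)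
  then show "\<psi> z \<le> sigma \<psi> \<Phi> * \<Phi> z" by (simp add: sigma_def S_def)
qed
end
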